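(* Let $m\ge 2$ and $1\le\ell<m$. The algorithm that, given an $\ell$-truncated election, returns a candidate with the highest $\mathrm{worst}$ Minimax score (defined in the context) approximates the Minimax rule within a factor of $$\frac{1}{(m-\ell)\left(1+\frac{\ell^2}{m^2-\ell^2-m+\ell}\right)}\ \ge\ \frac{1}{m-\ell/2};$$ that is, for every election $E$, the returned candidate $w$ satisfies $\mathrm{sc}_{\mathrm{MM}}(w)\ge\frac{1}{(m-\ell)\left(1+\frac{\ell^2}{m^2-\ell^2-m+\ell}\right)}\max_{c\in C}\mathrm{sc}_{\mathrm{MM}}(c)$, and moreover $(m-\ell)\left(1+\frac{\ell^2}{m^2-\ell^2-m+\ell}\right)\le m-\ell/2$.
   Context: An election consists of a set $V$ of $n$ voters and a set $C$ of $m$ candidates; each voter $v$ has a strict linear order $\succ_v$ over $C$. For $c,c'\in C$, $\mathrm{sc}_{\mathrm{MM}}(c,c')=|\{v: c\succ_v c'\}|$ and $\mathrm{sc}_{\mathrm{MM}}(c)=\min_{c'\neq c}\mathrm{sc}_{\mathrm{MM}}(c,c')$. In the $\ell$-truncated election each voter reveals only the ordered list of her top $\ell$ candidates. For a voter $v$ and candidates $c\neq d$, write $c\succ_v^t d$ if $c$ is among $v$'s top $\ell$ candidates and either $d$ is not among them or $c\succ_v d$. The worst Minimax score is $\mathrm{worst}(c)=\min_{c'\neq c}|\{v\in V: c\succ_v^t c'\}|$ (the Minimax score of $c$ when $c$ is placed last by every voter not listing it) and the best Minimax score is $\mathrm{best}(c)=\min_{c'\neq c}\big(n-|\{v\in V: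 c'\succ_v^t c\}|\big)$. *)

theory Defs
  imports Complex_Main
begin

text \<open>A voter's strict linear order over C is a list enumerating C without repetition,
  best candidate first.\<close>
definition is_ranking :: "'c set \<Rightarrow> 'c list \<Rightarrow> bool" where
  "is_ranking C p \<longleftrightarrow> distinct p \<and> set p = C"

definition prefers :: "'c list \<Rightarrow> 'c \<Rightarrow> 'c \<Rightarrow> bool" where
  "prefers p c d \<longleftrightarrow> (\<exists>i j. i < j \<and> j < length p \<and> p ! i = c \<and> p ! j = d)"

definition tprefers :: "nat \<Rightarrow> 'c list \<Rightarrow> 'c \<Rightarrow> 'c \<Rightarrow> bool" where
  "tprefers l p c d \<longleftrightarrow> c \<in> set (take l p) \<and> (d \<notin> set (take l p) \<or> prefers p c d)"

definition sc_pair :: "'v set \<Rightarrow> ('v \<Rightarrow> 'c list) \<Rightarrow> 'c \<Rightarrow> 'c \<Rightarrow> nat" where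
  "sc_pair V P c c' = card {v \<in> V. prefers (P v) c c'}"

definition sc_MM :: "'v set \<Rightarrow> 'c set \<Rightarrow> ('v \<Rightarrow> 'c list) \<Rightarrow> 'c \<Rightarrow> nat" where
  "sc_MM V C P c = Min ((\<lambda>c'. sc_pair V P c c') ` (C - {c}))"

definition worst_MM :: "nat \<Rightarrow> 'v set \<Rightarrow> 'c set \<Rightarrow> ('v \<Rightarrow> 'c list) \<Rightarrow> 'c \<Rightarrow> nat" where
  "worst_MM l V C P c = Min ((\<lambda>c'. card {v \<in> V. tprefers l (P v) c c'}) ` (C - {c}))"

end

theory Submission
  imports Defs
begin

text \<open>Let \<open>c\<close> be a Minimax winner with score \<open>M\<close>, let \<open>w\<close> maximise the worst score \<open>s\<close>,
  and let \<open>b\<close> voters omit \<open>c\<close> from their truncated ballots. Then \<open>M \<le> s + b\<close>, since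
  only the \<open>b\<close> voters can support \<open>c\<close> invisibly. Each of the \<open>b\<close> voters lists \<open>l\<close>
  candidates above \<open>c\<close>, and every such visible defeat of \<open>c\<close> costs \<open>c\<close> support in a
  pairwise contest, so \<open>(m - 1) M + l b \<le> (m - 1) n\<close>. Finally every voter's top choice is
  visibly preferred to all others, so \<open>n \<le> m s\<close>. Eliminating \<open>b\<close> and \<open>n\<close> gives
  \<open>(m + l - 1) M \<le> (m\<^sup>2 - m + l) s\<close>, and \<open>s \<le> sc_MM w\<close> because truncation only hides
  support.\<close>

lemma nth_mem_take: "i < l \<Longrightarrow> i < length p \<Longrightarrow> p ! i \<in> set (take l p)"
  by (metis in_set_conv_nth length_take min_less_iff_conj nth_take)

lemma tprefers_imp_prefers:
  assumes "d \<in> set p" "tprefers l p c d"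
  shows "prefers p c d"
proof (cases "d \<in> set (take l p)")
  case True
  then show ?thesis using assms(2) unfolding tprefers_def by auto
next
  case False
  obtain i where i: "i < l" "i < length p" "p ! i = c"
    using assms(2) unfolding tprefers_def by (auto simp: in_set_conv_nth)
  obtain j where j: "j < length p" "p ! j = d"
    using assms(1) by (auto simp: in_set_conv_nth)
  have "i < j" using False nth_mem_take[of j l p] i(1) j by fastforce
  then show ?thesis unfolding prefers_def using i j by blast
qed

lemma prefers_imp_not_tprefers:
  assumes "distinct p" "prefers p c d"
  shows "\<not> tprefers l p d c"
proof
  assume t: "tprefers l p d c"
  obtain i j where ij: "i < j" "j < length p" "p ! i = c" "p ! j = d"
    using assms(2) unfolding prefers_def by blast
  obtain j' where j': "j' < l" "j' < length p" "p ! j' = d"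
    using t unfolding tprefers_def by (auto simp: in_set_conv_nth)
  have "j' = j" using nth_eq_iff_index_eq[OF assms(1) j'(2) ij(2)] j'(3) ij(4) by simp
  then have "c \<in> set (take l p)" using ij j' nth_mem_take[of i l p] by simp
  then have "prefers p d c" using t unfolding tprefers_def by auto
  then obtain a b where ab: "a < b" "b < length p" "p ! a = d" "p ! b = c"
    unfolding prefers_def by blast
  have "a = j" using nth_eq_iff_index_eq[OF assms(1), of a j] ab ij by simp
  moreover have "b = i" using nth_eq_iff_index_eq[OF assms(1), of b i] ab ij by simp
  ultimately show False using ab(1) ij(1) by simp
qed

lemma tprefers_hd:
  assumes "1 \<le> l" "d \<in> set p" "d \<noteq> hd p"
  shows "tprefers l p (hd p) d"
proof -
  have "p \<noteq> []" using assms(2) by auto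
  then have top: "hd p \<in> set (take l p)" using assms(1) by (cases p; cases l) auto
  obtain j where j: "j < length p" "p ! j = d" using assms(2) by (auto simp: in_set_conv_nth)
  then have "0 < j" using assms(3) \<open>p \<noteq> []\<close> by (metis gr0I hd_conv_nth)
  then have "prefers p (hd p) d"
    unfolding prefers_def using j \<open>p \<noteq> []\<close> by (metis hd_conv_nth)
  then show ?thesis unfolding tprefers_def using top by blast
qed

lemma approximation_factor_eq:
  fixes m l :: real
  assumes "1 \<le> l" "l < m"
  shows "(m - l) * (1 + l\<^sup>2 / (m\<^sup>2 - l\<^sup>2 - m + l)) = (m\<^sup>2 - m + l) / (m + l - 1)"
proof -
  have factor: "m\<^sup>2 - l\<^sup>2 - m + l = (m - l) * (m + l - 1)"
    by (simp add: algebra_simps power2_eq_square)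
  have "m - l > 0" "m + l - 1 > 0" using assms by auto
  then have "(m - l) * (1 + l\<^sup>2 / ((m - l) * (m + l - 1)))
      = (m - l) + l\<^sup>2 / (m + l - 1)"
    by (simp add: distrib_left)
  also have "\<dots> = ((m - l) * (m + l - 1) + l\<^sup>2) / (m + l - 1)"
    using \<open>m + l - 1 > 0\<close> by (simp add: field_simps)
  also have "(m - l) * (m + l - 1) + l\<^sup>2 = m\<^sup>2 - m + l"
    by (simp add: algebra_simps power2_eq_square)
  finally show ?thesis unfolding factor .
qed

lemma approximation_factor_le:
  fixes m l :: real
  assumes "0 \<le> l" "l + 1 \<le> m"
  shows "(m\<^sup>2 - m + l) / (m + l - 1) \<le> m - l / 2"
proof -
  have "(m - l / 2) * (m + l - 1) - (m\<^sup>2 - m + l) = l * (m - l - 1) / 2"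
    by (simp add: field_simps power2_eq_square)
  moreover have "l * (m - l - 1) \<ge> 0" using assms by simp
  ultimately have "m\<^sup>2 - m + l \<le> (m - l / 2) * (m + l - 1)" by linarith
  then show ?thesis using assms by (simp add: divide_le_eq)
qed

lemma inverse_approximation_factor_mult_le:
  fixes m l M s :: real
  assumes "1 \<le> l" "l < m" and bound: "(m + l - 1) * M \<le> (m\<^sup>2 - m + l) * s"
  shows "1 / ((m - l) * (1 + l\<^sup>2 / (m\<^sup>2 - l\<^sup>2 - m + l))) * M \<le> s"
proof -
  have "0 \<le> m * (m - 1)" using assms(1,2) by simp
  then have num: "m\<^sup>2 - m + l > 0" using assms(1) by (simp add: algebra_simps power2_eq_square)
  have "1 / ((m\<^sup>2 - m + l) / (m + l - 1)) * M = (m + l - 1) * M / (m\<^sup>2 - m + l)"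
    by simp
  also have "\<dots> \<le> s" using bound num by (simp add: pos_divide_le_eq mult.commute)
  finally show ?thesis using approximation_factor_eq[OF assms(1,2)] by simp
qed

locale election =
  fixes V :: "'v set" and C :: "'c set" and P :: "'v \<Rightarrow> 'c list"
  assumes finite_V: "finite V"
    and finite_C: "finite C"
    and two_candidates: "2 \<le> card C"
    and ranking: "v \<in> V \<Longrightarrow> is_ranking C (P v)"
begin

lemma distinct_P: "v \<in> V \<Longrightarrow> distinct (P v)"
  and set_P: "v \<in> V \<Longrightarrow> set (P v) = C"
  using ranking unfolding is_ranking_def by auto

lemma length_P: "v \<in> V \<Longrightarrow> length (P v) = card C"
  by (metis distinct_P set_P distinct_card)

lemma others_nonempty: "C - {c} \<noteq> {}"
proof
  assume "C - {c} = {}"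
  then have "card C \<le> card {c}" by (intro card_mono) auto
  then show False using two_candidates by simp
qed

lemma sc_MM_le: "d \<in> C - {c} \<Longrightarrow> sc_MM V C P c \<le> sc_pair V P c d"
  unfolding sc_MM_def using finite_C by (intro Min_le) auto

lemma sc_MM_attained: obtains d where "d \<in> C - {c}" "sc_MM V C P c = sc_pair V P c d"
proof -
  have "sc_MM V C P c \<in> sc_pair V P c ` (C - {c})"
    unfolding sc_MM_def using finite_C others_nonempty by (intro Min_in) auto
  then show ?thesis using that by auto
qed

lemma worst_MM_le:
  "d \<in> C - {c} \<Longrightarrow> worst_MM l V C P c \<le> card {v \<in> V. tprefers l (P v) c d}"
  unfolding worst_MM_def using finite_C by (intro Min_le) auto

lemma worst_MM_attained:
  obtains d where "d \<in> C - {c}" "worst_MM l V C P c = card {v \<in> V. tprefers l (P v) c d}"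
proof -
  have "worst_MM l V C P c \<in> (\<lambda>d. card {v \<in> V. tprefers l (P v) c d}) ` (C - {c})"
    unfolding worst_MM_def using finite_C others_nonempty by (intro Min_in) auto
  then show ?thesis using that by auto
qed

definition not_listing :: "nat \<Rightarrow> 'c \<Rightarrow> 'v set" where
  "not_listing l c = {v \<in> V. c \<notin> set (take l (P v))}"

lemma finite_not_listing: "finite (not_listing l c)"
  unfolding not_listing_def using finite_V by simp

lemma worst_MM_le_sc_MM: "worst_MM l V C P c \<le> sc_MM V C P c"
proof -
  obtain d where d: "d \<in> C - {c}" "sc_MM V C P c = sc_pair V P c d"
    by (rule sc_MM_attained)
  have "{v \<in> V. tprefers l (P v) c d} \<subseteq> {v \<in> V. prefers (P v) c d}"
    using d(1) by (auto simp: set_P intro: tprefers_imp_prefers)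
  then have "card {v \<in> V. tprefers l (P v) c d} \<le> sc_pair V P c d"
    unfolding sc_pair_def using finite_V by (intro card_mono) auto
  then show ?thesis using worst_MM_le[where l = l, OF d(1)] d(2) by linarith
qed

lemma sc_MM_le_worst_MM_not_listing:
  "sc_MM V C P c \<le> worst_MM l V C P c + card (not_listing l c)"
proof -
  obtain d where d: "d \<in> C - {c}" "worst_MM l V C P c = card {v \<in> V. tprefers l (P v) c d}"
    by (rule worst_MM_attained)
  have "{v \<in> V. prefers (P v) c d} \<subseteq> {v \<in> V. tprefers l (P v) c d} \<union> not_listing l c"
    by (auto simp: tprefers_def not_listing_def)
  then have "sc_pair V P c d \<le> card ({v \<in> V. tprefers l (P v) c d} \<union> not_listing l c)"
    unfolding sc_pair_def using finite_V finite_not_listing by (intro card_mono) auto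
  also have "\<dots> \<le> card {v \<in> V. tprefers l (P v) c d} + card (not_listing l c)"
    by (rule card_Un_le)
  finally show ?thesis using sc_MM_le[OF d(1)] d(2) by linarith
qed

lemma sc_MM_plus_visible_defeats_le:
  assumes "d \<in> C - {c}"
  shows "sc_MM V C P c + card {v \<in> V. tprefers l (P v) d c} \<le> card V"
proof -
  have "{v \<in> V. prefers (P v) c d} \<inter> {v \<in> V. tprefers l (P v) d c} = {}"
    using prefers_imp_not_tprefers[OF distinct_P] by blast
  then have "sc_pair V P c d + card {v \<in> V. tprefers l (P v) d c}
      = card ({v \<in> V. prefers (P v) c d} \<union> {v \<in> V. tprefers l (P v) d c})"
    unfolding sc_pair_def using finite_V by (simp add: card_Un_disjoint)
  also have "\<dots> \<le> card V" using finite_V by (intro card_mono) auto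
  finally show ?thesis using sc_MM_le[OF assms] by linarith
qed

lemma not_listing_visible_defeats:
  assumes "l \<le> card C" "v \<in> not_listing l c"
  shows "l \<le> card {d \<in> C - {c}. tprefers l (P v) d c}"
proof -
  from assms(2) have v: "v \<in> V" and c: "c \<notin> set (take l (P v))"
    unfolding not_listing_def by auto
  have "card (set (take l (P v))) = l"
    using distinct_P[OF v] length_P[OF v] assms(1) by (simp add: distinct_card)
  moreover have "set (take l (P v)) \<subseteq> {d \<in> C - {c}. tprefers l (P v) d c}"
    using c set_P[OF v] set_take_subset[of l "P v"] by (auto simp: tprefers_def)
  moreover have "finite {d \<in> C - {c}. tprefers l (P v) d c}" using finite_C by simp
  ultimately show ?thesis using card_mono by metis
qed

lemma sum_visible_defeats_ge:
  assumes "l \<le> card C"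
  shows "l * card (not_listing l c) \<le> (\<Sum>d \<in> C - {c}. card {v \<in> V. tprefers l (P v) d c})"
proof -
  have "l * card (not_listing l c) = (\<Sum>v \<in> not_listing l c. l)" by simp
  also have "\<dots> \<le> (\<Sum>v \<in> not_listing l c. card {d \<in> C - {c}. tprefers l (P v) d c})"
    by (rule sum_mono) (rule not_listing_visible_defeats[OF assms])
  also have "\<dots> \<le> (\<Sum>v \<in> V. card {d \<in> C - {c}. tprefers l (P v) d c})"
    using finite_V by (intro sum_mono2) (auto simp: not_listing_def)
  also have "\<dots> = (\<Sum>d \<in> C - {c}. card {v \<in> V. tprefers l (P v) d c})"
    using finite_V finite_C by (intro sum_multicount_gen) auto
  finally show ?thesis .
qed

lemma sc_MM_not_listing_bound:
  assumes "c \<in> C" "l \<le> card C"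
  shows "(card C - 1) * sc_MM V C P c + l * card (not_listing l c) \<le> (card C - 1) * card V"
proof -
  have "(\<Sum>d \<in> C - {c}. sc_MM V C P c + card {v \<in> V. tprefers l (P v) d c}) \<le> (\<Sum>d \<in> C - {c}. card V)"
    by (intro sum_mono sc_MM_plus_visible_defeats_le)
  then have "(card C - 1) * sc_MM V C P c + (\<Sum>d \<in> C - {c}. card {v \<in> V. tprefers l (P v) d c})
      \<le> (card C - 1) * card V"
    using assms(1) finite_C by (simp add: sum.distrib)
  then show ?thesis using sum_visible_defeats_ge[OF assms(2), of c] by linarith
qed

lemma card_top_le_worst_MM:
  assumes "1 \<le> l" "c \<in> C"
  shows "card {v \<in> V. hd (P v) = c} \<le> worst_MM l V C P c"
proof -
  obtain d where d: "d \<in> C - {c}" "worst_MM l V C P c = card {v \<in> V. tprefers l (P v) c d}"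
    by (rule worst_MM_attained)
  have "{v \<in> V. hd (P v) = c} \<subseteq> {v \<in> V. tprefers l (P v) c d}"
    using tprefers_hd[OF assms(1)] d(1) set_P by fastforce
  then show ?thesis using d(2) finite_V by (simp add: card_mono)
qed

lemma card_V_le_worst_MM:
  assumes "1 \<le> l" and worst_le: "\<forall>c \<in> C. worst_MM l V C P c \<le> s"
  shows "card V \<le> card C * s"
proof -
  have "V \<subseteq> (\<Union>c \<in> C. {v \<in> V. hd (P v) = c})"
    using set_P length_P two_candidates by (fastforce simp: hd_in_set simp flip: length_greater_0_conv)
  then have "card V \<le> card (\<Union>c \<in> C. {v \<in> V. hd (P v) = c})"
    using finite_C finite_V by (intro card_mono) auto
  also have "\<dots> \<le> (\<Sum>c \<in> C. card {v \<in> V. hd (P v) = c})"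
    by (rule card_UN_le[OF finite_C])
  also have "\<dots> \<le> (\<Sum>c \<in> C. s)"
    using card_top_le_worst_MM[OF assms(1)] worst_le by (intro sum_mono) (meson order_trans)
  finally show ?thesis by simp
qed

lemma sc_MM_le_worst_MM_winner:
  assumes "1 \<le> l" "l \<le> card C" "c \<in> C"
    and "\<forall>c \<in> C. worst_MM l V C P c \<le> s"
  shows "(l + (card C - 1)) * sc_MM V C P c \<le> (l + (card C - 1) * card C) * s"
proof -
  let ?M = "sc_MM V C P c" and ?b = "card (not_listing l c)"
  have "?M \<le> s + ?b"
    using sc_MM_le_worst_MM_not_listing[of c l] assms(3,4) by fastforce
  then have "l * ?M \<le> l * s + l * ?b"
    using mult_le_mono2[of ?M "s + ?b" l] by (simp add: add_mult_distrib2)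
  then have "l * ?M + (card C - 1) * ?M \<le> l * s + (card C - 1) * card V"
    using sc_MM_not_listing_bound[OF assms(3,2)] by linarith
  also have "\<dots> \<le> l * s + (card C - 1) * (card C * s)"
    using card_V_le_worst_MM[OF assms(1,4)] by simp
  finally show ?thesis by (simp add: algebra_simps)
qed

end

theorem theorem8:
  fixes V :: "'v set" and C :: "'c set" and P :: "'v \<Rightarrow> 'c list"
    and m l :: nat and w :: 'c
  assumes "finite V" and "finite C" and "card C = m"
    and "m \<ge> 2" and "1 \<le> l" and "l < m"
    and "\<forall>v\<in>V. is_ranking C (P v)"
    and "w \<in> C"
    and "\<forall>c\<in>C. worst_MM l V C P c \<le> worst_MM l V C P w"
  shows "real (sc_MM V C P w) \<ge>
           (1 / ((real m - real l) * (1 + real l ^ 2 /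
              (real m ^ 2 - real l ^ 2 - real m + real l))))
           * real (Max (sc_MM V C P ` C))
         \<and> (real m - real l) * (1 + real l ^ 2 /
              (real m ^ 2 - real l ^ 2 - real m + real l)) \<le> real m - real l / 2"
proof -
  interpret election V C P
    using assms by unfold_locales auto
  have "Max (sc_MM V C P ` C) \<in> sc_MM V C P ` C"
    using finite_C assms(8) by (intro Max_in) auto
  then obtain c where c: "c \<in> C" "Max (sc_MM V C P ` C) = sc_MM V C P c" by auto
  let ?M = "sc_MM V C P c" and ?s = "worst_MM l V C P w"
  have "(l + (m - 1)) * ?M \<le> (l + (m - 1) * m) * ?s"
    using sc_MM_le_worst_MM_winner[OF assms(5) _ c(1) assms(9)] assms(3,6) by simp
  then have "real ((l + (m - 1)) * ?M) \<le> real ((l + (m - 1) * m) * ?s)"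
    by (simp only: of_nat_le_iff)
  moreover have "1 \<le> m" using assms(4) by simp
  ultimately have "(real m + real l - 1) * ?M \<le> (real m ^ 2 - real m + real l) * ?s"
    by (simp only: of_nat_mult of_nat_add of_nat_diff of_nat_1)
      (simp add: algebra_simps power2_eq_square)
  then have "1 / ((real m - real l) * (1 + real l ^ 2 /
      (real m ^ 2 - real l ^ 2 - real m + real l))) * ?M \<le> ?s"
    using assms(5,6) by (intro inverse_approximation_factor_mult_le) auto
  moreover have "?s \<le> sc_MM V C P w" by (rule worst_MM_le_sc_MM)
  moreover have "(real m - real l) * (1 + real l ^ 2 /
      (real m ^ 2 - real l ^ 2 - real m + real l)) \<le> real m - real l / 2"
    using approximation_factor_eq[of "real l" "real m"] approximation_factor_le[of "real l" "real m"]
      assms(5,6) by simp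
  ultimately show ?thesis using c(2) by simp
qed

end
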